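(* Let $u_0\in\ell^\infty_+(\mathbb{Z})$ with $\frac12\le u_0\le1$, let $\Psi_*$ be a creation operator with jump sequence $d\le L$, and $G_\beta(u)=\frac{\beta}{|\beta|}u^\beta$. 1. Let $\beta<0$ and let $u$ be a classical solution of $\partial_tu=\Delta G_\beta(u)$, $u(0)=\Psi_*u_0$, with $u\le1$ and $u(t,\cdot)\ge c(1\wedge t^{\frac1{1-\beta}})$ for all $t\ge0$, where $c>0$ depends only on $\beta,L$. Then for every $T>0$ there is $C=C(\beta,L,T)$ with $|u(t_2,k)-u(t_1,k)|\le C|t_2-t_1|^{\frac1{1-\beta}}$ for all $t_1,t_2\in[0,T]$, $k\in\mathbb{Z}$. 2. Let $\beta\in(0,1]$ and let $u$ be a classical solution of the same problem with $0\le u\le1$. Then $|u(t_2,k)-u(t_1,k)|\le4|t_2-t_1|$ for all $t_1,t_2\ge0$, $k\in\mathbb{Z}$.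
   Context: $\Delta v(k)=v(k-1)-2v(k)+v(k+1)$. Creation operator: for strictly increasing $\Psi:\mathbb{Z}\to\mathbb{Z}$, $\Psi_*x(\Psi(k))=x(k)$, $\Psi_*x(l)=0$ off $\Psi(\mathbb{Z})$; jump sequence = gaps $\Psi(k+1)-\Psi(k)-1$. Classical solution: $u\in C^0([0,\infty);\ell^\infty_+(\mathbb{Z}))$ with the initial datum, $u(\cdot,k)\in C^1((0,\infty))$ positive and satisfying the equation pointwise. *)

theory Defs
  imports "HOL-Analysis.Analysis"
begin

definition dlap :: "(int \<Rightarrow> real) \<Rightarrow> int \<Rightarrow> real" where
  "dlap v k = v (k - 1) - 2 * v k + v (k + 1)"

definition linf_plus :: "(int \<Rightarrow> real) set" where
  "linf_plus = {x. (\<exists>B. \<forall>k. \<bar>x k\<bar> \<le> B) \<and> (\<forall>k. 0 \<le> x k)}"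

text \<open>Creation operator: for strictly increasing Psi, (push Psi x)(Psi k) = x k, zero off the range.\<close>
definition push :: "(int \<Rightarrow> int) \<Rightarrow> (int \<Rightarrow> real) \<Rightarrow> int \<Rightarrow> real" where
  "push Psi x l = (if l \<in> range Psi then x (inv Psi l) else 0)"

definition jump :: "(int \<Rightarrow> int) \<Rightarrow> int \<Rightarrow> int" where
  "jump Psi k = Psi (k + 1) - Psi k - 1"

definition Gb :: "real \<Rightarrow> real \<Rightarrow> real" where
  "Gb beta s = (beta / \<bar>beta\<bar>) * s powr beta"

definition classical_solution :: "real \<Rightarrow> (int \<Rightarrow> real) \<Rightarrow> (real \<Rightarrow> int \<Rightarrow> real) \<Rightarrow> bool" where
  "classical_solution beta v0 u \<longleftrightarrow>
     (\<forall>t\<ge>0. u t \<in> linf_plus) \<and>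
     (\<forall>t\<ge>0. \<forall>e>0. \<exists>d>0. \<forall>s\<ge>0. \<bar>s - t\<bar> < d \<longrightarrow> (\<forall>k. \<bar>u s k - u t k\<bar> \<le> e)) \<and>
     u 0 = v0 \<and>
     (\<forall>k. \<exists>u'. continuous_on {0<..} u' \<and>
        (\<forall>t>0. ((\<lambda>s. u s k) has_real_derivative u' t) (at t) \<and>
               0 < u t k \<and>
               u' t = dlap (\<lambda>j. Gb beta (u t j)) k))"

end

theory Submission
  imports Defs
begin

text \<open>
  Both estimates come from a pointwise bound on the time derivative \<open>\<Delta>G(u(t))(k)\<close>: the
  discrete Laplacian of a sequence with values in an interval of length \<open>l\<close> has modulus at
  most \<open>2 l\<close>. For \<open>\<beta> > 0\<close> the values of \<open>u\<^sup>\<beta>\<close> lie in \<open>[0,1]\<close>, so each \<open>u(\<cdot>,k)\<close> is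
  2-Lipschitz. For \<open>\<beta> < 0\<close> the values of \<open>-u\<^sup>\<beta>\<close> lie in \<open>[-m\<^sup>\<beta>, 0]\<close> with
  \<open>m = c min(1, t\<^sup>\<alpha>)\<close>, \<open>\<alpha> = 1/(1-\<beta>)\<close>; since \<open>\<alpha>\<beta> = \<alpha> - 1\<close> this gives
  \<open>|\<partial>\<^sub>tu| \<le> 2c\<^sup>\<beta> (1 + t\<^sup>\<alpha>\<^sup>-\<^sup>1)\<close>, whose primitive \<open>t + t\<^sup>\<alpha>/\<alpha>\<close> is \<open>\<alpha>\<close>-Holder on \<open>[0,T]\<close>
  by subadditivity of \<open>t\<^sup>\<alpha>\<close>.
\<close>

lemma abs_diff_le_of_abs_deriv_le:
  fixes f F f' F' :: "real \<Rightarrow> real"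
  assumes "a \<le> b"
    and cont: "continuous_on {a..b} f" "continuous_on {a..b} F"
    and f: "\<And>t. a < t \<Longrightarrow> t < b \<Longrightarrow> (f has_real_derivative f' t) (at t)"
    and F: "\<And>t. a < t \<Longrightarrow> t < b \<Longrightarrow> (F has_real_derivative F' t) (at t)"
    and bound: "\<And>t. a < t \<Longrightarrow> t < b \<Longrightarrow> \<bar>f' t\<bar> \<le> F' t"
  shows "\<bar>f b - f a\<bar> \<le> F b - F a"
proof -
  have "F a - f a \<le> F b - f b"
  proof (rule DERIV_nonneg_imp_increasing_open[OF \<open>a \<le> b\<close>])
    show "\<exists>y. ((\<lambda>t. F t - f t) has_real_derivative y) (at t) \<and> 0 \<le> y" if "a < t" "t < b" for t
      using DERIV_diff[OF F f, OF that that] bound[OF that] by auto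
    show "continuous_on {a..b} (\<lambda>t. F t - f t)"
      using cont by (rule continuous_on_diff[rotated])
  qed
  moreover have "F a + f a \<le> F b + f b"
  proof (rule DERIV_nonneg_imp_increasing_open[OF \<open>a \<le> b\<close>])
    show "\<exists>y. ((\<lambda>t. F t + f t) has_real_derivative y) (at t) \<and> 0 \<le> y" if "a < t" "t < b" for t
      using DERIV_add[OF F f, OF that that] bound[OF that] by auto
    show "continuous_on {a..b} (\<lambda>t. F t + f t)"
      using cont by (rule continuous_on_add[rotated])
  qed
  ultimately show ?thesis
    by simp
qed

lemma powr_add_le_add_powr:
  fixes x y a :: real
  assumes "0 \<le> x" "0 \<le> y" "0 < a" "a \<le> 1"
  shows "(x + y) powr a \<le> x powr a + y powr a"
proof (cases "x + y = 0")
  case True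
  then show ?thesis using assms by simp
next
  case False
  then have s: "0 < x + y" using assms by simp
  have le_powr: "z \<le> z powr a" if "0 \<le> z" "z \<le> 1" for z :: real
    using powr_mono'[of a 1 z] that assms(4) by simp
  have "1 = x / (x + y) + y / (x + y)"
    using s by (simp add: add_divide_distrib[symmetric])
  also have "\<dots> \<le> (x / (x + y)) powr a + (y / (x + y)) powr a"
    using assms s by (intro add_mono le_powr) auto
  also have "\<dots> = (x powr a + y powr a) / (x + y) powr a"
    using assms s by (simp only: powr_divide add_divide_distrib)
  finally show ?thesis
    using s by (simp add: le_divide_eq_1_pos)
qed

lemma le_powr_mult_powr:
  fixes x T a :: real
  assumes "0 \<le> x" "x \<le> T" "0 \<le> a" "a \<le> 1"
  shows "x \<le> T powr (1 - a) * x powr a"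
proof (cases "x = 0")
  case False
  then have "x = x powr (1 - a) * x powr a"
    using assms by (simp add: powr_add[symmetric])
  also have "\<dots> \<le> T powr (1 - a) * x powr a"
    using assms by (intro mult_right_mono powr_mono2) auto
  finally show ?thesis .
qed simp

lemma abs_dlap_le:
  assumes "\<And>j. a \<le> v j" "\<And>j. v j \<le> b"
  shows "\<bar>dlap v k\<bar> \<le> 2 * (b - a)"
  using assms[of "k - 1"] assms[of k] assms[of "k + 1"] unfolding dlap_def by auto

lemma abs_dlap_Gb_le_of_pos:
  assumes "0 < beta" "\<And>j. 0 \<le> v j \<and> v j \<le> 1"
  shows "\<bar>dlap (\<lambda>j. Gb beta (v j)) k\<bar> \<le> 2"
proof -
  have "0 \<le> Gb beta (v j) \<and> Gb beta (v j) \<le> 1" for j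
    using assms by (auto simp: Gb_def intro!: powr_le1)
  then show ?thesis
    using abs_dlap_le[of 0 "\<lambda>j. Gb beta (v j)" 1 k] by simp
qed

lemma abs_dlap_Gb_le_of_neg:
  assumes "beta < 0" "0 < m" "\<And>j. m \<le> v j"
  shows "\<bar>dlap (\<lambda>j. Gb beta (v j)) k\<bar> \<le> 2 * m powr beta"
proof -
  have "- (m powr beta) \<le> Gb beta (v j) \<and> Gb beta (v j) \<le> 0" for j
    using assms powr_mono2'[of beta m "v j"] by (simp add: Gb_def)
  then show ?thesis
    using abs_dlap_le[of "- (m powr beta)" "\<lambda>j. Gb beta (v j)" 0 k] by simp
qed

lemma min_one_powr_le:
  fixes x b :: real
  shows "min 1 x powr b \<le> 1 + x powr b"
  by (cases "x \<le> 1") (auto simp: min_def)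

lemma classical_solution_continuous_on:
  assumes "classical_solution beta v0 u"
  shows "continuous_on {0..} (\<lambda>t. u t k)"
proof (rule continuous_on_iff[THEN iffD2], intro ballI allI impI)
  have cont: "\<forall>t\<ge>0. \<forall>e>0. \<exists>d>0. \<forall>s\<ge>0. \<bar>s - t\<bar> < d \<longrightarrow> (\<forall>k. \<bar>u s k - u t k\<bar> \<le> e)"
    using assms unfolding classical_solution_def by (elim conjE)
  fix t e :: real
  assume "t \<in> {0..}" "0 < e"
  then obtain d where "d > 0" and d: "\<forall>s\<ge>0. \<bar>s - t\<bar> < d \<longrightarrow> (\<forall>k. \<bar>u s k - u t k\<bar> \<le> e / 2)"
    using cont by (meson atLeast_iff half_gt_zero)
  show "\<exists>d>0. \<forall>s\<in>{0..}. dist s t < d \<longrightarrow> dist (u s k) (u t k) < e"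
  proof (intro exI[of _ d] conjI ballI impI)
    fix s :: real assume "s \<in> {0..}" "dist s t < d"
    then have "\<bar>u s k - u t k\<bar> \<le> e / 2"
      using d by (simp add: dist_real_def)
    then show "dist (u s k) (u t k) < e"
      using \<open>0 < e\<close> by (simp add: dist_real_def)
  qed (fact \<open>d > 0\<close>)
qed

lemma classical_solution_has_derivative:
  assumes "classical_solution beta v0 u" "0 < t"
  shows "((\<lambda>s. u s k) has_real_derivative dlap (\<lambda>j. Gb beta (u t j)) k) (at t)"
  using assms unfolding classical_solution_def by metis

lemma holder_of_abs_deriv_le:
  fixes f f' :: "real \<Rightarrow> real"
  assumes \<alpha>: "0 < \<alpha>" "\<alpha> \<le> 1" and "0 \<le> K"
    and cont: "continuous_on {0..} f"
    and deriv: "\<And>t. 0 < t \<Longrightarrow> (f has_real_derivative f' t) (at t)"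
    and bound: "\<And>t. 0 < t \<Longrightarrow> \<bar>f' t\<bar> \<le> K * (1 + t powr (\<alpha> - 1))"
    and "0 \<le> a" "a \<le> T" "0 \<le> b" "b \<le> T"
  shows "\<bar>f b - f a\<bar> \<le> K * (T powr (1 - \<alpha>) + 1 / \<alpha>) * \<bar>b - a\<bar> powr \<alpha>"
proof -
  have one_sided: "\<bar>f y - f x\<bar> \<le> K * (T powr (1 - \<alpha>) + 1 / \<alpha>) * (y - x) powr \<alpha>"
    if "0 \<le> x" "x \<le> y" "y \<le> T" for x y
  proof -
    define F where "F t = K * t + K / \<alpha> * t powr \<alpha>" for t
    have "\<bar>f y - f x\<bar> \<le> F y - F x"
    proof (rule abs_diff_le_of_abs_deriv_le[OF \<open>x \<le> y\<close>])
      show "continuous_on {x..y} f"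
        using continuous_on_subset[OF cont] that by auto
      show "continuous_on {x..y} F"
        using that \<alpha> unfolding F_def
        by (intro continuous_on_add continuous_on_mult continuous_on_const continuous_on_id
            continuous_on_powr') auto
      fix t assume "x < t"
      then have "0 < t" using that by simp
      show "(f has_real_derivative f' t) (at t)" by (rule deriv[OF \<open>0 < t\<close>])
      show "(F has_real_derivative K * (1 + t powr (\<alpha> - 1))) (at t)"
        unfolding F_def using \<open>0 < t\<close> \<alpha>
        by (auto intro!: derivative_eq_intros simp: field_simps)
      show "\<bar>f' t\<bar> \<le> K * (1 + t powr (\<alpha> - 1))" by (rule bound[OF \<open>0 < t\<close>])
    qed
    also have "F y - F x = K * (y - x) + K / \<alpha> * (y powr \<alpha> - x powr \<alpha>)"
      unfolding F_def by (simp add: algebra_simps)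
    also have "\<dots> \<le> K * (T powr (1 - \<alpha>) * (y - x) powr \<alpha>) + K / \<alpha> * (y - x) powr \<alpha>"
      using that \<alpha> \<open>0 \<le> K\<close> powr_add_le_add_powr[of x "y - x" \<alpha>]
      by (intro add_mono mult_left_mono le_powr_mult_powr) auto
    finally show ?thesis
      by (simp add: algebra_simps)
  qed
  show ?thesis
    using one_sided[of a b] one_sided[of b a] assms
    by (cases "a \<le> b") (auto simp: abs_minus_commute)
qed

lemma classical_solution_holder_of_neg:
  fixes beta :: real
  defines "\<alpha> \<equiv> 1 / (1 - beta)"
  assumes "beta < 0" "0 < c"
    and sol: "classical_solution beta v0 u"
    and lower: "\<forall>t\<ge>0. \<forall>k. c * min 1 (t powr \<alpha>) \<le> u t k"
    and "0 \<le> t1" "t1 \<le> T" "0 \<le> t2" "t2 \<le> T"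
  shows "\<bar>u t2 k - u t1 k\<bar> \<le> 2 * c powr beta * (T powr (1 - \<alpha>) + 1 / \<alpha>) * \<bar>t2 - t1\<bar> powr \<alpha>"
proof (rule holder_of_abs_deriv_le[OF _ _ _ classical_solution_continuous_on[OF sol]
      classical_solution_has_derivative[OF sol]])
  show \<alpha>: "0 < \<alpha>" "\<alpha> \<le> 1"
    using \<open>beta < 0\<close> by (auto simp: \<alpha>_def field_simps)
  fix t :: real assume "0 < t"
  have "\<bar>dlap (\<lambda>j. Gb beta (u t j)) k\<bar> \<le> 2 * (c * min 1 (t powr \<alpha>)) powr beta"
    using \<open>0 < t\<close> \<open>0 < c\<close> lower by (intro abs_dlap_Gb_le_of_neg[OF \<open>beta < 0\<close>]) auto
  also have "\<dots> = 2 * c powr beta * min 1 (t powr \<alpha>) powr beta"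
    using \<open>0 < c\<close> \<open>0 < t\<close> by (simp add: powr_mult)
  also have "\<dots> \<le> 2 * c powr beta * (1 + t powr (\<alpha> * beta))"
    using min_one_powr_le[of "t powr \<alpha>" beta] by (intro mult_left_mono) (auto simp: powr_powr)
  also have "\<alpha> * beta = \<alpha> - 1"
    using \<open>beta < 0\<close> by (simp add: \<alpha>_def field_simps)
  finally show "\<bar>dlap (\<lambda>j. Gb beta (u t j)) k\<bar> \<le> 2 * c powr beta * (1 + t powr (\<alpha> - 1))" .
qed (use assms in auto)

lemma classical_solution_lipschitz_of_pos:
  assumes "0 < beta" and sol: "classical_solution beta v0 u"
    and bounds: "\<forall>t\<ge>0. \<forall>k. 0 \<le> u t k \<and> u t k \<le> 1"
    and "0 \<le> t1" "0 \<le> t2"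
  shows "\<bar>u t2 k - u t1 k\<bar> \<le> 2 * \<bar>t2 - t1\<bar>"
proof -
  have "\<bar>u y k - u x k\<bar> \<le> 2 * y - 2 * x" if "0 \<le> x" "x \<le> y" for x y
  proof (rule abs_diff_le_of_abs_deriv_le[OF \<open>x \<le> y\<close>])
    show "continuous_on {x..y} (\<lambda>t. u t k)"
      using continuous_on_subset[OF classical_solution_continuous_on[OF sol]] that by auto
    fix t assume "x < t"
    then have "0 < t" using that by simp
    show "((\<lambda>t. u t k) has_real_derivative dlap (\<lambda>j. Gb beta (u t j)) k) (at t)"
      by (rule classical_solution_has_derivative[OF sol \<open>0 < t\<close>])
    show "\<bar>dlap (\<lambda>j. Gb beta (u t j)) k\<bar> \<le> 2"
      using \<open>0 < t\<close> bounds by (intro abs_dlap_Gb_le_of_pos[OF \<open>0 < beta\<close>]) auto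
  qed (auto intro!: derivative_eq_intros continuous_on_mult continuous_on_id continuous_on_const)
  from this[of t1 t2] this[of t2 t1] show ?thesis
    using assms by (cases "t1 \<le> t2") (auto simp: abs_minus_commute)
qed

theorem lemma4p4:
  shows
  "(\<forall>beta L c T. beta < 0 \<longrightarrow> c > 0 \<longrightarrow> T > 0 \<longrightarrow>
      (\<exists>C. \<forall>(u0 :: int \<Rightarrow> real) (Psi :: int \<Rightarrow> int) (u :: real \<Rightarrow> int \<Rightarrow> real).
         u0 \<in> linf_plus \<longrightarrow> (\<forall>k. 1/2 \<le> u0 k \<and> u0 k \<le> 1) \<longrightarrow>
         strict_mono Psi \<longrightarrow> (\<forall>k. real_of_int (jump Psi k) \<le> L) \<longrightarrow>
         classical_solution beta (push Psi u0) u \<longrightarrow>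
         (\<forall>t\<ge>0. \<forall>k. u t k \<le> 1) \<longrightarrow>
         (\<forall>t\<ge>0. \<forall>k. c * min 1 (t powr (1 / (1 - beta))) \<le> u t k) \<longrightarrow>
         (\<forall>t1 t2 k. 0 \<le> t1 \<longrightarrow> t1 \<le> T \<longrightarrow> 0 \<le> t2 \<longrightarrow> t2 \<le> T \<longrightarrow>
            \<bar>u t2 k - u t1 k\<bar> \<le> C * \<bar>t2 - t1\<bar> powr (1 / (1 - beta)))))
   \<and>
   (\<forall>beta L (u0 :: int \<Rightarrow> real) (Psi :: int \<Rightarrow> int) (u :: real \<Rightarrow> int \<Rightarrow> real).
      0 < beta \<longrightarrow> beta \<le> 1 \<longrightarrow>
      u0 \<in> linf_plus \<longrightarrow> (\<forall>k. 1/2 \<le> u0 k \<and> u0 k \<le> 1) \<longrightarrow>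
      strict_mono Psi \<longrightarrow> (\<forall>k. real_of_int (jump Psi k) \<le> L) \<longrightarrow>
      classical_solution beta (push Psi u0) u \<longrightarrow>
      (\<forall>t\<ge>0. \<forall>k. 0 \<le> u t k \<and> u t k \<le> 1) \<longrightarrow>
      (\<forall>t1 t2 k. 0 \<le> t1 \<longrightarrow> 0 \<le> t2 \<longrightarrow> \<bar>u t2 k - u t1 k\<bar> \<le> 4 * \<bar>t2 - t1\<bar>))"
  apply (intro conjI allI impI)
  subgoal for beta L c T
    using classical_solution_holder_of_neg[of beta c, where T = T]
    by (intro exI[of _ "2 * c powr beta * (T powr (1 - 1 / (1 - beta)) + (1 - beta))"] allI impI)
      simp
  subgoal for beta L u0 Psi u t1 t2 k
    using classical_solution_lipschitz_of_pos[of beta "push Psi u0" u t1 t2 k] by simp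
  done

end
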